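(* Let $1\le t\le n$. The minimal prime ideals of $I_t(L_n)$ are exactly the ideals $\mathfrak p_F=(x_i: i\in F)$ with $F\in C_{n,t}$, where $C_{n,t}$ is the set of subsets $F=\{i_1,\ldots,i_r\}\subseteq[n]$, $i_1<\cdots<i_r$, satisfying: (1) $1\le i_1\le t$; (2) $i_2>t$; (3) $1\le i_{j+1}-i_j\le t$ for $j=1,\ldots,r-1$; (4) $i_{j+2}-i_j>t$ for $j=1,\ldots,r-2$; (5) $i_{r-1}<n-t+1$; (6) $n-t+1\le i_r\le n$ (conditions referring to indices not in $\{1,\ldots,r\}$ are vacuous). Equivalently, $C_{n,t}$ is the set of minimal vertex covers of $\Delta_{n,t}$.
   Context: $K$ is a field, $S=K[x_1,\ldots,x_n]$, $I_t(L_n)=(u_1,\ldots,u_{n-t+1})$ with $u_i=x_ix_{i+1}\cdots x_{i+t-1}$. $\Delta_{n,t}$ is the simplicial complex on $[n]$ with facets $\{i,\ldots,i+t-1\}$, $i=1,\ldots,n-t+1$; a vertex cover is a subset of $[n]$ meeting every facet, minimal if no proper subset is a vertex cover. *)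

theory Defs
  imports "HOL-Library.Poly_Mapping" "HOL-Algebra.Ideal"
begin

type_synonym 'a mpoly = "(nat \<Rightarrow>\<^sub>0 nat) \<Rightarrow>\<^sub>0 'a"

definition Var :: "nat \<Rightarrow> 'a::comm_ring_1 mpoly" where
  "Var i = Poly_Mapping.single (Poly_Mapping.single i 1) 1"

definition polyring :: "nat \<Rightarrow> ('a::comm_ring_1 mpoly) ring" where
  "polyring n = \<lparr>carrier = {p :: 'a mpoly. \<forall>m\<in>Poly_Mapping.keys p. Poly_Mapping.keys m \<subseteq> {1..n}},
                 monoid.mult = (*), one = 1, zero = 0, add = (+)\<rparr>"

definition path_gen :: "nat \<Rightarrow> nat \<Rightarrow> 'a::comm_ring_1 mpoly" where
  "path_gen t i = (\<Prod>k\<in>{i..i+t-1}. Var k)"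

definition path_ideal :: "nat \<Rightarrow> nat \<Rightarrow> 'a::comm_ring_1 mpoly set" where
  "path_ideal n t = genideal (polyring n) {path_gen t i | i. 1 \<le> i \<and> i \<le> n - t + 1}"

definition var_ideal :: "nat \<Rightarrow> nat set \<Rightarrow> 'a::comm_ring_1 mpoly set" where
  "var_ideal n F = genideal (polyring n) (Var ` F)"

definition minimal_prime :: "('b, 'c) ring_scheme \<Rightarrow> 'b set \<Rightarrow> 'b set \<Rightarrow> bool" where
  "minimal_prime R I P \<longleftrightarrow> primeideal P R \<and> I \<subseteq> P \<and>
     (\<forall>Q. primeideal Q R \<and> I \<subseteq> Q \<and> Q \<subseteq> P \<longrightarrow> Q = P)"

text \<open>The set C_{n,t}; xs ! j is i_{j+1} (0-based list of the sorted elements).\<close>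
definition Cnt :: "nat \<Rightarrow> nat \<Rightarrow> nat set set" where
  "Cnt n t = {F. F \<subseteq> {1..n} \<and> F \<noteq> {} \<and>
     (let xs = sorted_list_of_set F; r = length xs in
        1 \<le> xs ! 0 \<and> xs ! 0 \<le> t \<and>
        (2 \<le> r \<longrightarrow> xs ! 1 > t) \<and>
        (\<forall>j. j + 1 < r \<longrightarrow> 1 \<le> xs ! (j+1) - xs ! j \<and> xs ! (j+1) - xs ! j \<le> t) \<and>
        (\<forall>j. j + 2 < r \<longrightarrow> xs ! (j+2) - xs ! j > t) \<and>
        (2 \<le> r \<longrightarrow> xs ! (r - 2) < n - t + 1) \<and>
        n - t + 1 \<le> xs ! (r - 1) \<and> xs ! (r - 1) \<le> n)}"

text \<open>Vertex covers of Delta_{n,t} (facets {i..i+t-1}, i = 1..n-t+1).\<close>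
definition vertex_cover :: "nat \<Rightarrow> nat \<Rightarrow> nat set \<Rightarrow> bool" where
  "vertex_cover n t C \<longleftrightarrow> C \<subseteq> {1..n} \<and>
     (\<forall>i. 1 \<le> i \<and> i \<le> n - t + 1 \<longrightarrow> C \<inter> {i..i+t-1} \<noteq> {})"

definition minimal_vertex_cover :: "nat \<Rightarrow> nat \<Rightarrow> nat set \<Rightarrow> bool" where
  "minimal_vertex_cover n t C \<longleftrightarrow> vertex_cover n t C \<and>
     (\<forall>D. D \<subset> C \<longrightarrow> \<not> vertex_cover n t D)"

end

theory Submission
  imports Defs
begin

text \<open>
  A vertex cover F of Delta_{n,t} is minimal iff each of its vertices is the only vertex of F in
  some facet. Writing F = {i_1 < ... < i_r}, the vertex i_j has such a private facet iff the gap
  between its neighbours i_{j-1} and i_{j+1} (with sentinels 0 and n + 1) exceeds t, which gives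
  conditions (2), (4), (5); conditions (1), (3), (6) say exactly that F is a cover.

  On the algebraic side, p_F consists of the polynomials all of whose monomials involve some x_i
  with i in F. Splitting a polynomial into the part avoiding these variables and the rest shows
  that p_F is prime. A prime contains a product of variables iff it contains one of them, so the
  variables in a prime P containing I_t(L_n) form a vertex cover G, and p_G is contained in P.
  Hence the minimal primes are the p_F with F a minimal vertex cover.
\<close>

abbreviation keys :: "('b \<Rightarrow>\<^sub>0 'c::zero) \<Rightarrow> 'b set" where
  "keys \<equiv> Poly_Mapping.keys"

abbreviation lookup :: "('b \<Rightarrow>\<^sub>0 'c::zero) \<Rightarrow> 'b \<Rightarrow> 'c" where
  "lookup \<equiv> Poly_Mapping.lookup"

section \<open>Minimal vertex covers of the path complex\<close>

definition private_facet :: "nat \<Rightarrow> nat \<Rightarrow> nat set \<Rightarrow> nat \<Rightarrow> bool" where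
  "private_facet n t F x \<longleftrightarrow> (\<exists>i. 1 \<le> i \<and> i \<le> n - t + 1 \<and> F \<inter> {i..i+t-1} \<subseteq> {x})"

lemma minimal_vertex_cover_iff_private_facets:
  "minimal_vertex_cover n t F \<longleftrightarrow> vertex_cover n t F \<and> (\<forall>x\<in>F. private_facet n t F x)"
proof
  assume "minimal_vertex_cover n t F"
  then have cov: "vertex_cover n t F" and smaller: "\<And>D. D \<subset> F \<Longrightarrow> \<not> vertex_cover n t D"
    by (auto simp: minimal_vertex_cover_def)
  have "private_facet n t F x" if "x \<in> F" for x
  proof -
    have "\<not> vertex_cover n t (F - {x})" using smaller that by blast
    moreover have "F - {x} \<subseteq> {1..n}" using cov by (auto simp: vertex_cover_def)
    ultimately obtain i where "1 \<le> i" "i \<le> n - t + 1" "(F - {x}) \<inter> {i..i+t-1} = {}"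
      unfolding vertex_cover_def by blast
    then show ?thesis unfolding private_facet_def by blast
  qed
  then show "vertex_cover n t F \<and> (\<forall>x\<in>F. private_facet n t F x)"
    using cov by blast
next
  assume cov: "vertex_cover n t F \<and> (\<forall>x\<in>F. private_facet n t F x)"
  have "\<not> vertex_cover n t D" if "D \<subset> F" for D
  proof
    assume "vertex_cover n t D"
    obtain x where x: "x \<in> F" "x \<notin> D" using \<open>D \<subset> F\<close> by blast
    then obtain i where i: "1 \<le> i" "i \<le> n - t + 1" "F \<inter> {i..i+t-1} \<subseteq> {x}"
      using cov by (auto simp: private_facet_def)
    then have "D \<inter> {i..i+t-1} \<noteq> {}"
      using \<open>vertex_cover n t D\<close> by (simp add: vertex_cover_def)
    then show False using i(3) x \<open>D \<subset> F\<close> by blast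
  qed
  then show "minimal_vertex_cover n t F" using cov by (simp add: minimal_vertex_cover_def)
qed

lemma vertex_cover_meets_first_facet:
  assumes "vertex_cover n t F"
  shows "F \<inter> {1..t} \<noteq> {}"
proof -
  have "\<And>i. 1 \<le> i \<Longrightarrow> i \<le> n - t + 1 \<Longrightarrow> F \<inter> {i..i+t-1} \<noteq> {}"
    using assms by (simp add: vertex_cover_def)
  from this[of 1] show ?thesis by simp
qed

lemma exists_minimal_vertex_cover_subset:
  assumes "vertex_cover n t C"
  shows "\<exists>G\<subseteq>C. minimal_vertex_cover n t G"
proof -
  obtain G where G: "G \<subseteq> C" "vertex_cover n t G"
    and least: "\<And>D. D \<subseteq> C \<and> vertex_cover n t D \<Longrightarrow> card G \<le> card D"
    using ex_has_least_nat[of "\<lambda>G. G \<subseteq> C \<and> vertex_cover n t G" C card] assms by blast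
  have "finite G" using G by (auto simp: vertex_cover_def intro: finite_subset)
  have "\<not> vertex_cover n t D" if "D \<subset> G" for D
    using least[of D] psubset_card_mono[OF \<open>finite G\<close> that] that G by auto
  then show ?thesis using G by (auto simp: minimal_vertex_cover_def)
qed

locale sorted_vertex_set =
  fixes F :: "nat set" and xs :: "nat list" and n t :: nat
  assumes F_finite: "finite F" and F_nonempty: "F \<noteq> {}" and F_subset: "F \<subseteq> {1..n}"
    and xs_def: "xs = sorted_list_of_set F" and t_bounds: "1 \<le> t" "t \<le> n"
begin

abbreviation "r \<equiv> length xs"

lemma set_xs: "set xs = F"
  using xs_def F_finite by simp

lemma length_pos: "0 < r"
  using set_xs F_nonempty by auto

lemma nth_less_nth_iff: "j < r \<Longrightarrow> k < r \<Longrightarrow> xs!j < xs!k \<longleftrightarrow> j < k"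
  using sorted_wrt_nth_less[of "(<)" xs] xs_def
  by (metis linorder_neqE_nat not_less_iff_gr_or_eq sorted_list_of_set.strict_sorted_key_list_of_set)

lemma nth_le_nth: "j \<le> k \<Longrightarrow> k < r \<Longrightarrow> xs!j \<le> xs!k"
  using nth_less_nth_iff[of j k] by (cases "j = k") auto

lemma nth_mem: "j < r \<Longrightarrow> xs!j \<in> F"
  using set_xs by auto

lemma nth_bounds:
  assumes "j < r" shows "1 \<le> xs!j \<and> xs!j \<le> n"
  using nth_mem[OF assms] F_subset by auto

lemma ex_nth_eq: "x \<in> F \<Longrightarrow> \<exists>j<r. xs!j = x"
  using set_xs by (metis in_set_conv_nth)

lemma vertex_cover_iff_gaps:
  "vertex_cover n t F \<longleftrightarrow>
     xs!0 \<le> t \<and> (\<forall>j. j+1 < r \<longrightarrow> xs!(j+1) \<le> xs!j + t) \<and> n < xs!(r-1) + t"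
proof
  assume cov: "vertex_cover n t F"
  have meets: "\<exists>k<r. i \<le> xs!k \<and> xs!k \<le> i+t-1" if "1 \<le> i" "i + t \<le> n + 1" for i
  proof -
    have "F \<inter> {i..i+t-1} \<noteq> {}" using cov that t_bounds by (auto simp: vertex_cover_def)
    then obtain f where "f \<in> F" "i \<le> f" "f \<le> i+t-1" by auto
    then show ?thesis using ex_nth_eq by blast
  qed
  have "xs!0 \<le> t"
  proof -
    obtain k where "k < r" "xs!k \<le> t" using meets[of 1] t_bounds by auto
    then show ?thesis using nth_le_nth[of 0 k] by simp
  qed
  moreover have "xs!(j+1) \<le> xs!j + t" if j: "j+1 < r" for j
  proof (rule ccontr)
    assume "\<not> ?thesis"
    then have gap: "xs!j + t < xs!(j+1)" by simp
    have "xs!(j+1) \<le> n" using nth_bounds j by blast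
    then obtain k where k: "k < r" "xs!j + 1 \<le> xs!k" "xs!k \<le> xs!j + t"
      using meets[of "xs!j + 1"] gap by auto
    then have "j < k" using nth_less_nth_iff[of j k] j by simp
    then have "xs!(j+1) \<le> xs!k" using nth_le_nth k by simp
    then show False using k gap by simp
  qed
  moreover have "n < xs!(r-1) + t"
  proof -
    obtain k where "k < r" "n - t + 1 \<le> xs!k" using meets[of "n-t+1"] t_bounds by auto
    moreover have "xs!k \<le> xs!(r-1)" using nth_le_nth[of k "r-1"] \<open>k < r\<close> by simp
    ultimately show ?thesis using t_bounds by linarith
  qed
  ultimately show "xs!0 \<le> t \<and> (\<forall>j. j+1 < r \<longrightarrow> xs!(j+1) \<le> xs!j + t) \<and> n < xs!(r-1) + t"
    by blast
next
  assume gaps: "xs!0 \<le> t \<and> (\<forall>j. j+1 < r \<longrightarrow> xs!(j+1) \<le> xs!j + t) \<and> n < xs!(r-1) + t"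
  show "vertex_cover n t F" unfolding vertex_cover_def
  proof (intro conjI allI impI)
    fix i assume i: "1 \<le> i \<and> i \<le> n - t + 1"
    have ex: "\<exists>k. k < r \<and> i \<le> xs!k"
      using gaps i length_pos t_bounds by (intro exI[of _ "r-1"]) auto
    define j where "j = (LEAST k. k < r \<and> i \<le> xs!k)"
    have j: "j < r" "i \<le> xs!j" using LeastI_ex[OF ex] unfolding j_def by auto
    have "xs!j \<le> i + t - 1"
    proof (cases j)
      case 0 then show ?thesis using gaps i by auto
    next
      case (Suc j')
      then have "\<not> (j' < r \<and> i \<le> xs!j')"
        using not_less_Least[of j' "\<lambda>k. k < r \<and> i \<le> xs!k"] j_def by auto
      then have "xs!j' < i" using j Suc by auto
      moreover have "xs!j \<le> xs!j' + t" using gaps j Suc by auto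
      ultimately show ?thesis by auto
    qed
    then have "xs!j \<in> F \<inter> {i..i+t-1}" using j nth_mem by auto
    then show "F \<inter> {i..i+t-1} \<noteq> {}" by blast
  qed (rule F_subset)
qed

text \<open>
  The vertex \<open>xs!j\<close> has a private facet iff the integers strictly between its neighbours, with
  sentinels 0 and n + 1, include t consecutive ones.
\<close>

definition gap_start :: "nat \<Rightarrow> nat" where
  "gap_start j = (if j = 0 then 1 else xs!(j-1) + 1)"

definition gap_end :: "nat \<Rightarrow> nat" where
  "gap_end j = (if j = r - 1 then n + 1 else xs!(j+1))"

lemma private_facet_iff_gap:
  assumes cov: "vertex_cover n t F" and j: "j < r"
  shows "private_facet n t F (xs!j) \<longleftrightarrow> gap_start j + t \<le> gap_end j"
proof
  assume "private_facet n t F (xs!j)"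
  then obtain i where i: "1 \<le> i" "i + t \<le> n + 1" "F \<inter> {i..i+t-1} \<subseteq> {xs!j}"
    using t_bounds by (auto simp: private_facet_def)
  have "i \<le> n - t + 1" using i(2) t_bounds by linarith
  then have "F \<inter> {i..i+t-1} \<noteq> {}" using cov i(1) by (simp add: vertex_cover_def)
  then have hit: "xs!j \<in> {i..i+t-1}" using i(3) by blast
  have "gap_start j \<le> i"
  proof (cases "j = 0")
    case False
    then have "xs!(j-1) < xs!j" "xs!(j-1) \<in> F"
      using nth_less_nth_iff[of "j-1" j] nth_mem[of "j-1"] j by auto
    then show ?thesis using i(3) hit False by (force simp: gap_start_def)
  qed (use i in \<open>simp add: gap_start_def\<close>)
  moreover have "i + t \<le> gap_end j"
  proof (cases "j = r - 1")
    case False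
    then have "xs!j < xs!(j+1)" "xs!(j+1) \<in> F"
      using nth_less_nth_iff[of j "j+1"] nth_mem[of "j+1"] j by auto
    then show ?thesis using i(3) hit False by (force simp: gap_end_def)
  qed (use i in \<open>simp add: gap_end_def\<close>)
  ultimately show "gap_start j + t \<le> gap_end j" by simp
next
  assume room: "gap_start j + t \<le> gap_end j"
  have "gap_end j \<le> n + 1"
    using j nth_bounds[of "j+1"] by (cases "j + 1 < r") (auto simp: gap_end_def)
  moreover have "F \<inter> {gap_start j..gap_start j+t-1} \<subseteq> {xs!j}"
  proof
    fix x assume x: "x \<in> F \<inter> {gap_start j..gap_start j+t-1}"
    then obtain k where k: "k < r" "xs!k = x" using ex_nth_eq by blast
    have "\<not> k < j"
    proof
      assume "k < j"
      then have "xs!k \<le> xs!(j-1)" using nth_le_nth[of k "j-1"] j by simp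
      then show False using x k \<open>k < j\<close> by (simp add: gap_start_def)
    qed
    moreover have "\<not> j < k"
    proof
      assume "j < k"
      then have "xs!(j+1) \<le> xs!k" "j \<noteq> r - 1" using nth_le_nth[of "j+1" k] k by auto
      then show False using x k room t_bounds by (simp add: gap_end_def; linarith)
    qed
    ultimately show "x \<in> {xs!j}" using k by auto
  qed
  moreover have "1 \<le> gap_start j" by (simp add: gap_start_def)
  ultimately show "private_facet n t F (xs!j)"
    unfolding private_facet_def using room t_bounds
    by (intro exI[of _ "gap_start j"]) auto
qed

lemma gaps_iff_Cnt_conditions:
  "(\<forall>j<r. gap_start j + t \<le> gap_end j) \<longleftrightarrow>
     (2 \<le> r \<longrightarrow> t < xs!1) \<and> (\<forall>j. j+2 < r \<longrightarrow> t < xs!(j+2) - xs!j) \<and>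
     (2 \<le> r \<longrightarrow> xs!(r-2) < n - t + 1)"
proof
  assume room: "\<forall>j<r. gap_start j + t \<le> gap_end j"
  have "t < xs!1" if "2 \<le> r"
    using room[rule_format, of 0] that length_pos by (simp add: gap_start_def gap_end_def)
  moreover have "t < xs!(j+2) - xs!j" if "j+2 < r" for j
    using room[rule_format, of "j+1"] that by (auto simp: gap_start_def gap_end_def split: if_splits)
  moreover have "xs!(r-2) < n - t + 1" if "2 \<le> r"
  proof -
    have "r - 1 - 1 = r - 2" by simp
    then have "xs!(r-2) + t \<le> n"
      using room[rule_format, of "r-1"] that length_pos by (simp add: gap_start_def gap_end_def)
    then show ?thesis by linarith
  qed
  ultimately show "(2 \<le> r \<longrightarrow> t < xs!1) \<and> (\<forall>j. j+2 < r \<longrightarrow> t < xs!(j+2) - xs!j) \<and>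
     (2 \<le> r \<longrightarrow> xs!(r-2) < n - t + 1)" by blast
next
  assume sep: "(2 \<le> r \<longrightarrow> t < xs!1) \<and> (\<forall>j. j+2 < r \<longrightarrow> t < xs!(j+2) - xs!j) \<and>
     (2 \<le> r \<longrightarrow> xs!(r-2) < n - t + 1)"
  show "\<forall>j<r. gap_start j + t \<le> gap_end j"
  proof (intro allI impI)
    fix j assume j: "j < r"
    consider "j = 0" "r = 1" | "j = 0" "2 \<le> r" | "j \<noteq> 0" "j = r - 1" | "j \<noteq> 0" "j + 1 < r"
      using j by linarith
    then show "gap_start j + t \<le> gap_end j"
    proof cases
      case 3
      then have "r - 2 = j - 1" "2 \<le> r" by auto
      then have "xs!(j-1) < n - t + 1" using sep by simp
      then show ?thesis using 3 t_bounds by (simp add: gap_start_def gap_end_def)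
    next
      case 4
      then have "(j-1) + 2 < r" by simp
      then have "t < xs!((j-1) + 2) - xs!(j-1)" using sep by blast
      moreover have "(j-1) + 2 = j + 1" using 4 by simp
      ultimately show ?thesis using 4 by (auto simp: gap_start_def gap_end_def)
    qed (use sep t_bounds in \<open>auto simp: gap_start_def gap_end_def\<close>)
  qed
qed

lemma minimal_vertex_cover_iff_gaps:
  "minimal_vertex_cover n t F \<longleftrightarrow> vertex_cover n t F \<and> (\<forall>j<r. gap_start j + t \<le> gap_end j)"
proof -
  have "(\<forall>x\<in>F. private_facet n t F x) \<longleftrightarrow> (\<forall>j<r. private_facet n t F (xs!j))"
    unfolding set_xs[symmetric] by (rule all_set_conv_all_nth)
  moreover have "(\<forall>j<r. private_facet n t F (xs!j)) \<longleftrightarrow> (\<forall>j<r. gap_start j + t \<le> gap_end j)"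
    if "vertex_cover n t F"
    using private_facet_iff_gap[OF that] by simp
  ultimately show ?thesis
    unfolding minimal_vertex_cover_iff_private_facets by (cases "vertex_cover n t F") simp_all
qed

lemma mem_Cnt_iff_minimal_vertex_cover: "F \<in> Cnt n t \<longleftrightarrow> minimal_vertex_cover n t F"
proof -
  have "1 \<le> xs!0" using nth_bounds[of 0] length_pos by simp
  then have trivial: "\<And>X. (F \<subseteq> {1..n} \<and> F \<noteq> {} \<and> 1 \<le> xs!0 \<and> X) \<longleftrightarrow> X"
    using F_subset F_nonempty by simp
  have "(1 \<le> xs!(j+1) - xs!j \<and> xs!(j+1) - xs!j \<le> t) \<longleftrightarrow> xs!(j+1) \<le> xs!j + t"
    if "j+1 < r" for j
    using nth_less_nth_iff[of j "j+1"] that by auto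
  then have steps: "(\<forall>j. j+1 < r \<longrightarrow> 1 \<le> xs!(j+1) - xs!j \<and> xs!(j+1) - xs!j \<le> t) \<longleftrightarrow>
      (\<forall>j. j+1 < r \<longrightarrow> xs!(j+1) \<le> xs!j + t)"
    by blast
  have last: "(n - t + 1 \<le> xs!(r-1) \<and> xs!(r-1) \<le> n) \<longleftrightarrow> n < xs!(r-1) + t"
    using nth_bounds[of "r-1"] length_pos t_bounds by auto
  have "F \<in> Cnt n t \<longleftrightarrow>
     xs!0 \<le> t \<and> (2 \<le> r \<longrightarrow> t < xs!1) \<and>
     (\<forall>j. j+1 < r \<longrightarrow> 1 \<le> xs!(j+1) - xs!j \<and> xs!(j+1) - xs!j \<le> t) \<and>
     (\<forall>j. j+2 < r \<longrightarrow> t < xs!(j+2) - xs!j) \<and> (2 \<le> r \<longrightarrow> xs!(r-2) < n - t + 1) \<and>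
     n - t + 1 \<le> xs!(r-1) \<and> xs!(r-1) \<le> n"
    unfolding Cnt_def mem_Collect_eq xs_def[symmetric] Let_def trivial by (rule refl)
  also have "\<dots> \<longleftrightarrow> vertex_cover n t F \<and> (\<forall>j<r. gap_start j + t \<le> gap_end j)"
    unfolding vertex_cover_iff_gaps gaps_iff_Cnt_conditions steps last by blast
  finally show ?thesis using minimal_vertex_cover_iff_gaps by simp
qed

end

lemma Cnt_eq_minimal_vertex_covers:
  assumes t: "1 \<le> t" "t \<le> n"
  shows "Cnt n t = {F. minimal_vertex_cover n t F}"
proof -
  have "F \<in> Cnt n t \<longleftrightarrow> minimal_vertex_cover n t F" for F
  proof (cases "F \<subseteq> {1..n} \<and> F \<noteq> {}")
    case True
    moreover have "finite F" using True finite_subset by blast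
    ultimately interpret sorted_vertex_set F "sorted_list_of_set F" n t
      using t by unfold_locales auto
    show ?thesis by (rule mem_Cnt_iff_minimal_vertex_cover)
  next
    case False
    then have "\<not> vertex_cover n t F"
      using vertex_cover_meets_first_facet unfolding vertex_cover_def by blast
    then show ?thesis using False by (simp add: Cnt_def minimal_vertex_cover_def)
  qed
  then show ?thesis by blast
qed

section \<open>Monomial prime ideals of the polynomial ring\<close>

definition mpolys :: "nat \<Rightarrow> 'a::comm_ring_1 mpoly set" where
  "mpolys n = {p. \<forall>m\<in>keys p. keys m \<subseteq> {1..n}}"

lemma polyring_simps [simp]:
  "carrier (polyring n) = mpolys n" "mult (polyring n) = (*)" "one (polyring n) = 1"
  "zero (polyring n) = 0" "add (polyring n) = (+)"
  by (simp_all add: polyring_def mpolys_def)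

lemma keys_add_monomials: "keys ((a::nat \<Rightarrow>\<^sub>0 nat) + b) = keys a \<union> keys b"
  by (auto simp: in_keys_iff lookup_add)

lemma mpolys_zero [simp]: "0 \<in> mpolys n"
  by (simp add: mpolys_def)

lemma mpolys_one [simp]: "(1 :: 'a::comm_ring_1 mpoly) \<in> mpolys n"
proof -
  have "keys (1 :: 'a mpoly) \<subseteq> {0}" by (simp add: keys_one)
  then show ?thesis by (auto simp: mpolys_def)
qed

lemma mpolys_uminus [simp]: "p \<in> mpolys n \<Longrightarrow> - p \<in> mpolys n"
  by (simp add: mpolys_def)

lemma mpolys_add [simp]: "p \<in> mpolys n \<Longrightarrow> q \<in> mpolys n \<Longrightarrow> p + q \<in> mpolys n"
  using keys_add[of p q] unfolding mpolys_def by blast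

lemma mpolys_diff [simp]: "p \<in> mpolys n \<Longrightarrow> q \<in> mpolys n \<Longrightarrow> p - q \<in> mpolys n"
  using mpolys_add[of p n "- q"] by simp

lemma mpolys_mult [simp]:
  assumes "p \<in> mpolys n" "q \<in> mpolys n"
  shows "p * q \<in> mpolys n"
  unfolding mpolys_def
proof (intro CollectI ballI)
  fix m assume "m \<in> keys (p * q)"
  then obtain a b where "m = a + b" "a \<in> keys p" "b \<in> keys q" using keys_mult by blast
  then show "keys m \<subseteq> {1..n}" using assms by (auto simp: mpolys_def keys_add_monomials)
qed

lemma cring_polyring: "cring (polyring n :: 'a::comm_ring_1 mpoly ring)"
proof (rule cringI)
  show "abelian_group (polyring n :: 'a mpoly ring)"
    by (rule abelian_groupI) (auto simp: algebra_simps intro!: bexI[of _ "- _"])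
  show "comm_monoid (polyring n :: 'a mpoly ring)"
    by (rule comm_monoidI) (auto simp: algebra_simps)
qed (auto simp: algebra_simps)

lemma a_inv_polyring:
  assumes "p \<in> mpolys n"
  shows "a_inv (polyring n) p = (- p :: 'a::comm_ring_1 mpoly)"
proof -
  interpret cring "polyring n :: 'a mpoly ring" by (rule cring_polyring)
  show ?thesis by (rule minus_equality) (use assms in auto)
qed

lemma ideal_polyring_sum_closed:
  assumes "ideal I (polyring n :: 'a::comm_ring_1 mpoly ring)" "finite A" "\<And>x. x \<in> A \<Longrightarrow> f x \<in> I"
  shows "sum f A \<in> I"
  using assms(2,3)
proof (induction A rule: finite_induct)
  case empty
  then show ?case using additive_subgroup.zero_closed[OF ideal.axioms(1)[OF assms(1)]] by simp
next
  case (insert x A)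
  then show ?case using additive_subgroup.a_closed[OF ideal.axioms(1)[OF assms(1)]] by simp
qed

lemma keys_Var: "keys (Var i :: 'a::comm_ring_1 mpoly) = {Poly_Mapping.single i 1}"
  by (simp add: Var_def)

lemma Var_in_mpolys: "i \<in> {1..n} \<Longrightarrow> (Var i :: 'a::comm_ring_1 mpoly) \<in> mpolys n"
  by (simp add: mpolys_def keys_Var)

lemma prod_Var_in_mpolys:
  "finite S \<Longrightarrow> S \<subseteq> {1..n} \<Longrightarrow> prod Var S \<in> (mpolys n :: 'a::comm_ring_1 mpoly set)"
  by (induction S rule: finite_induct) (auto simp: Var_in_mpolys)

lemma polynomial_eq_sum_monomials:
  "(p :: 'a::comm_ring_1 mpoly) = (\<Sum>m\<in>keys p. Poly_Mapping.single m (lookup p m))"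
proof (rule poly_mapping_eqI)
  fix k
  have "lookup (\<Sum>m\<in>keys p. Poly_Mapping.single m (lookup p m)) k =
      (\<Sum>m\<in>keys p. lookup (Poly_Mapping.single m (lookup p m)) k)"
    by (rule lookup_sum)
  also have "\<dots> = lookup p k"
    by (cases "k \<in> keys p") (auto simp: lookup_single when_def in_keys_iff)
  finally show "lookup p k = lookup (\<Sum>m\<in>keys p. Poly_Mapping.single m (lookup p m)) k" by simp
qed

lemma monomial_eq_Var_mult:
  assumes "lookup m i > 0"
  shows "Poly_Mapping.single m (c::'a::comm_ring_1) =
    Var i * Poly_Mapping.single (m - Poly_Mapping.single i 1) c"
proof -
  have "Poly_Mapping.single i 1 + (m - Poly_Mapping.single i 1) = m"
    by (rule poly_mapping_eqI) (use assms in \<open>auto simp: lookup_add lookup_minus lookup_single when_def\<close>)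
  then show ?thesis by (simp add: Var_def mult_single)
qed

definition var_divisible :: "nat \<Rightarrow> nat set \<Rightarrow> 'a::comm_ring_1 mpoly set" where
  "var_divisible n F = {p \<in> mpolys n. \<forall>m\<in>keys p. \<exists>i\<in>F. lookup m i > 0}"

lemma var_divisible_add:
  assumes "a \<in> var_divisible n F" "b \<in> var_divisible n F"
  shows "a + b \<in> var_divisible n F"
  using assms keys_add[of a b] mpolys_add[of a n b] unfolding var_divisible_def by blast

lemma var_divisible_uminus: "a \<in> var_divisible n F \<Longrightarrow> - a \<in> var_divisible n F"
  by (auto simp: var_divisible_def)

lemma var_divisible_mult:
  assumes a: "a \<in> var_divisible n F" and x: "x \<in> mpolys n"
  shows "x * a \<in> var_divisible n F"
proof -
  have "\<exists>i\<in>F. lookup m i > 0" if m: "m \<in> keys (x * a)" for m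
  proof -
    obtain m1 m2 where "m = m1 + m2" "m2 \<in> keys a" using keys_mult[of x a] m by blast
    with a obtain i where "i \<in> F" "lookup m2 i > 0" by (auto simp: var_divisible_def)
    then show ?thesis using \<open>m = m1 + m2\<close> by (auto simp: lookup_add)
  qed
  then show ?thesis using a x by (simp add: var_divisible_def)
qed

lemma Var_in_var_divisible_iff:
  "(Var k :: 'a::comm_ring_1 mpoly) \<in> var_divisible n F \<longleftrightarrow> k \<in> F \<and> k \<in> {1..n}"
  by (auto simp: var_divisible_def keys_Var mpolys_def lookup_single when_def)

lemma ideal_var_divisible: "ideal (var_divisible n F :: 'a::comm_ring_1 mpoly set) (polyring n)"
proof -
  interpret R: cring "polyring n :: 'a mpoly ring" by (rule cring_polyring)
  have "subgroup (var_divisible n F :: 'a mpoly set) (add_monoid (polyring n))"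
  proof (rule R.add.subgroupI)
    show "var_divisible n F \<subseteq> carrier (polyring n)" by (auto simp: var_divisible_def)
    show "var_divisible n F \<noteq> {}" by (auto simp: var_divisible_def intro!: exI[of _ 0])
  next
    fix a :: "'a mpoly" assume "a \<in> var_divisible n F"
    moreover from this have "a \<in> mpolys n" by (simp add: var_divisible_def)
    ultimately show "\<ominus>\<^bsub>polyring n\<^esub> a \<in> var_divisible n F"
      by (simp add: a_inv_polyring var_divisible_uminus)
  qed (simp add: var_divisible_add)
  moreover have "a * x \<in> var_divisible n F" if "a \<in> var_divisible n F" "x \<in> mpolys n" for a x :: "'a mpoly"
    using var_divisible_mult[OF that] by (simp add: mult.commute)
  ultimately show ?thesis
    by (intro idealI[OF R.ring_axioms]) (simp_all add: var_divisible_mult)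
qed

lemma var_ideal_eq_var_divisible:
  assumes F: "F \<subseteq> {1..n}"
  shows "var_ideal n F = (var_divisible n F :: 'a::comm_ring_1 mpoly set)"
proof -
  interpret R: cring "polyring n :: 'a mpoly ring" by (rule cring_polyring)
  have vars: "Var ` F \<subseteq> carrier (polyring n :: 'a mpoly ring)"
    using F by (auto intro!: Var_in_mpolys)
  let ?J = "var_ideal n F :: 'a mpoly set"
  have J: "ideal ?J (polyring n)" unfolding var_ideal_def by (rule R.genideal_ideal[OF vars])
  have VJ: "Var ` F \<subseteq> ?J" unfolding var_ideal_def by (rule R.genideal_self[OF vars])
  show ?thesis
  proof
    show "?J \<subseteq> var_divisible n F"
      unfolding var_ideal_def
      by (rule R.genideal_minimal[OF ideal_var_divisible]) (use F in \<open>auto simp: Var_in_var_divisible_iff\<close>)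
  next
    show "var_divisible n F \<subseteq> ?J"
    proof
      fix p :: "'a mpoly" assume p: "p \<in> var_divisible n F"
      have "Poly_Mapping.single m (lookup p m) \<in> ?J" if m: "m \<in> keys p" for m
      proof -
        obtain i where i: "i \<in> F" "lookup m i > 0" using p m by (auto simp: var_divisible_def)
        have "keys m \<subseteq> {1..n}" using p m by (auto simp: var_divisible_def mpolys_def)
        then have "Poly_Mapping.single (m - Poly_Mapping.single i 1) (lookup p m) \<in> mpolys n"
          by (auto simp: mpolys_def in_keys_iff lookup_minus)
        moreover have "Var i \<in> ?J" using VJ i(1) by blast
        ultimately show ?thesis
          using ideal.I_r_closed[OF J] unfolding monomial_eq_Var_mult[OF i(2)] by simp
      qed
      then have "(\<Sum>m\<in>keys p. Poly_Mapping.single m (lookup p m)) \<in> ?J"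
        by (intro ideal_polyring_sum_closed[OF J]) auto
      then show "p \<in> ?J" using polynomial_eq_sum_monomials[of p] by simp
    qed
  qed
qed

definition avoids :: "nat set \<Rightarrow> (nat \<Rightarrow>\<^sub>0 nat) \<Rightarrow> bool" where
  "avoids F m \<longleftrightarrow> (\<forall>i\<in>F. lookup m i = 0)"

definition avoiding_part :: "nat set \<Rightarrow> 'a::comm_ring_1 mpoly \<Rightarrow> 'a mpoly" where
  "avoiding_part F p = (\<Sum>m\<in>{m\<in>keys p. avoids F m}. Poly_Mapping.single m (lookup p m))"

lemma lookup_avoiding_part: "lookup (avoiding_part F p) m = (if avoids F m then lookup p m else 0)"
proof -
  have "lookup (avoiding_part F p) m =
      (\<Sum>k\<in>{k\<in>keys p. avoids F k}. if k = m then lookup p k else 0)"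
    unfolding avoiding_part_def lookup_sum by (rule sum.cong) (auto simp: lookup_single when_def)
  also have "\<dots> = (if avoids F m then lookup p m else 0)"
    by (auto simp: in_keys_iff)
  finally show ?thesis .
qed

lemma keys_avoiding_part: "m \<in> keys (avoiding_part F p) \<Longrightarrow> m \<in> keys p \<and> avoids F m"
  by (auto simp: in_keys_iff lookup_avoiding_part split: if_splits)

lemma avoiding_part_in_mpolys: "p \<in> mpolys n \<Longrightarrow> avoiding_part F p \<in> mpolys n"
  using keys_avoiding_part[of _ F p] by (auto simp: mpolys_def)

lemma diff_avoiding_part_in_var_divisible:
  assumes "p \<in> mpolys n"
  shows "p - avoiding_part F p \<in> var_divisible n F"
  using assms avoiding_part_in_mpolys[OF assms]
  by (auto simp: var_divisible_def in_keys_iff lookup_minus lookup_avoiding_part avoids_def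
      split: if_splits)

lemma avoiding_part_nonzero:
  assumes "p \<in> mpolys n" "p \<notin> var_divisible n F"
  shows "avoiding_part F p \<noteq> 0"
proof -
  obtain m where "m \<in> keys p" "avoids F m"
    using assms by (auto simp: var_divisible_def avoids_def)
  then have "lookup (avoiding_part F p) m \<noteq> 0" by (simp add: lookup_avoiding_part in_keys_iff)
  then show ?thesis by auto
qed

lemma mult_avoiding_parts_notin_var_divisible:
  assumes "avoiding_part F a * avoiding_part F b \<noteq> 0"
  shows "avoiding_part F a * avoiding_part F b \<notin> var_divisible n F"
proof
  assume in_P: "avoiding_part F a * avoiding_part F b \<in> var_divisible n F"
  obtain m where m: "m \<in> keys (avoiding_part F a * avoiding_part F b)" using assms by fastforce
  then obtain i where i: "i \<in> F" "lookup m i > 0" using in_P by (auto simp: var_divisible_def)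
  obtain m1 m2 where "m = m1 + m2" "m1 \<in> keys (avoiding_part F a)" "m2 \<in> keys (avoiding_part F b)"
    using keys_mult m by blast
  then have "avoids F m1" "avoids F m2" using keys_avoiding_part by blast+
  then show False using i \<open>m = m1 + m2\<close> by (auto simp: avoids_def lookup_add)
qed

lemma primeideal_var_divisible:
  "primeideal (var_divisible n F :: 'a::idom mpoly set) (polyring n)"
proof (rule primeidealI[OF ideal_var_divisible cring_polyring])
  have "(1::'a mpoly) \<notin> var_divisible n F" by (auto simp: var_divisible_def)
  then show "carrier (polyring n) \<noteq> (var_divisible n F :: 'a mpoly set)" by auto
next
  let ?P = "var_divisible n F :: 'a mpoly set" and ?low = "avoiding_part F :: 'a mpoly \<Rightarrow> 'a mpoly"
  fix a b :: "'a mpoly"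
  assume "a \<in> carrier (polyring n)" "b \<in> carrier (polyring n)" "a \<otimes>\<^bsub>polyring n\<^esub> b \<in> ?P"
  then have a: "a \<in> mpolys n" and b: "b \<in> mpolys n" and ab: "a * b \<in> ?P" by auto
  show "a \<in> ?P \<or> b \<in> ?P"
  proof (rule ccontr)
    assume "\<not> (a \<in> ?P \<or> b \<in> ?P)"
    then have "?low a * ?low b \<noteq> 0" using avoiding_part_nonzero[OF a] avoiding_part_nonzero[OF b] by simp
    then have "?low a * ?low b \<notin> ?P" by (rule mult_avoiding_parts_notin_var_divisible)
    moreover have "?low a * ?low b = a * b - ((a - ?low a) * b + ?low a * (b - ?low b))"
      by (simp add: algebra_simps)
    moreover have "(a - ?low a) * b \<in> ?P" "?low a * (b - ?low b) \<in> ?P"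
      using var_divisible_mult[OF diff_avoiding_part_in_var_divisible[OF a] b]
        var_divisible_mult[OF diff_avoiding_part_in_var_divisible[OF b] avoiding_part_in_mpolys[OF a]]
      by (simp_all add: mult.commute)
    ultimately show False
      using ab var_divisible_add var_divisible_uminus by (metis diff_conv_add_uminus)
  qed
qed

lemma primeideal_prod_Var:
  assumes P: "primeideal P (polyring n :: 'a::comm_ring_1 mpoly ring)"
  shows "finite S \<Longrightarrow> S \<noteq> {} \<Longrightarrow> S \<subseteq> {1..n} \<Longrightarrow> prod Var S \<in> P \<Longrightarrow> \<exists>k\<in>S. Var k \<in> P"
proof (induction S rule: finite_ne_induct)
  case (insert x S)
  then have "Var x * prod Var S \<in> P" "Var x \<in> mpolys n" "prod Var S \<in> mpolys n"
    by (auto intro!: Var_in_mpolys prod_Var_in_mpolys)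
  then have "Var x \<in> P \<or> prod Var S \<in> P" using primeideal.I_prime[OF P] by fastforce
  then show ?case using insert by auto
qed simp

section \<open>Minimal primes of the path ideal\<close>

definition vars_in :: "nat \<Rightarrow> 'a::comm_ring_1 mpoly set \<Rightarrow> nat set" where
  "vars_in n Q = {k \<in> {1..n}. Var k \<in> Q}"

lemma path_ideal_subset_iff:
  assumes "1 \<le> t" "t \<le> n" "ideal Q (polyring n :: 'a::comm_ring_1 mpoly ring)"
  shows "path_ideal n t \<subseteq> Q \<longleftrightarrow> (\<forall>i. 1 \<le> i \<and> i \<le> n - t + 1 \<longrightarrow> prod Var {i..i+t-1} \<in> Q)"
proof -
  interpret cring "polyring n :: 'a mpoly ring" by (rule cring_polyring)
  have "{path_gen t i | i. 1 \<le> i \<and> i \<le> n - t + 1} \<subseteq> carrier (polyring n :: 'a mpoly ring)"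
    using assms by (auto simp: path_gen_def intro!: prod_Var_in_mpolys)
  then have "path_ideal n t \<subseteq> Q \<longleftrightarrow> {path_gen t i | i. 1 \<le> i \<and> i \<le> n - t + 1} \<subseteq> Q"
    unfolding path_ideal_def by (rule Idl_subset_ideal[OF assms(3)])
  then show ?thesis by (auto simp: path_gen_def)
qed

lemma vertex_cover_vars_in_prime:
  assumes t: "1 \<le> t" "t \<le> n" and Q: "primeideal Q (polyring n :: 'a::comm_ring_1 mpoly ring)"
    and sub: "path_ideal n t \<subseteq> Q"
  shows "vertex_cover n t (vars_in n Q)"
  unfolding vertex_cover_def
proof (intro conjI allI impI)
  fix i assume i: "1 \<le> i \<and> i \<le> n - t + 1"
  then have "prod Var {i..i+t-1} \<in> Q"
    using sub path_ideal_subset_iff[OF t primeideal.axioms(1)[OF Q]] by blast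
  moreover have "{i..i+t-1} \<noteq> {}" "{i..i+t-1} \<subseteq> {1..n}" using i t by auto
  ultimately obtain k where "k \<in> {i..i+t-1}" "Var k \<in> Q"
    using primeideal_prod_Var[OF Q, of "{i..i+t-1}"] by auto
  then have "k \<in> vars_in n Q \<inter> {i..i+t-1}" using i t by (auto simp: vars_in_def)
  then show "vars_in n Q \<inter> {i..i+t-1} \<noteq> {}" by blast
qed (auto simp: vars_in_def)

lemma path_ideal_subset_var_divisible:
  assumes t: "1 \<le> t" "t \<le> n" and G: "vertex_cover n t G"
  shows "path_ideal n t \<subseteq> (var_divisible n G :: 'a::comm_ring_1 mpoly set)"
  unfolding path_ideal_subset_iff[OF t ideal_var_divisible]
proof (intro allI impI)
  fix i assume i: "1 \<le> i \<and> i \<le> n - t + 1"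
  then have "G \<inter> {i..i+t-1} \<noteq> {}" using G unfolding vertex_cover_def by blast
  then obtain k where k: "k \<in> G" "k \<in> {i..i+t-1}" by blast
  have "prod Var {i..i+t-1} = prod Var ({i..i+t-1} - {k}) * (Var k :: 'a mpoly)"
    using k(2) by (simp add: prod.remove mult.commute)
  moreover have "prod Var ({i..i+t-1} - {k}) \<in> (mpolys n :: 'a mpoly set)"
    using i t by (intro prod_Var_in_mpolys) auto
  moreover have "(Var k :: 'a mpoly) \<in> var_divisible n G"
    using k i t by (auto simp: Var_in_var_divisible_iff)
  ultimately show "prod Var {i..i+t-1} \<in> (var_divisible n G :: 'a mpoly set)"
    using var_divisible_mult by metis
qed

lemma var_divisible_subset_ideal:
  assumes "G \<subseteq> vars_in n Q" "ideal Q (polyring n :: 'a::comm_ring_1 mpoly ring)"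
  shows "(var_divisible n G :: 'a mpoly set) \<subseteq> Q"
proof -
  interpret cring "polyring n :: 'a mpoly ring" by (rule cring_polyring)
  have "G \<subseteq> {1..n}" "Var ` G \<subseteq> Q" using assms(1) by (auto simp: vars_in_def)
  then show ?thesis
    using var_ideal_eq_var_divisible genideal_minimal[OF assms(2)] by (metis var_ideal_def)
qed

theorem minimal_primes_path_ideal:
  assumes t: "1 \<le> t" "t \<le> n"
  shows "{P. minimal_prime (polyring n :: 'a::idom mpoly ring) (path_ideal n t) P}
           = var_ideal n ` {F. minimal_vertex_cover n t F}"
proof (rule Set.set_eqI, rule iffI)
  fix P :: "'a mpoly set"
  assume "P \<in> {P. minimal_prime (polyring n) (path_ideal n t) P}"
  then have P: "primeideal P (polyring n)" "path_ideal n t \<subseteq> P"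
    and least: "\<And>Q. primeideal Q (polyring n) \<and> path_ideal n t \<subseteq> Q \<and> Q \<subseteq> P \<Longrightarrow> Q = P"
    by (auto simp: minimal_prime_def)
  obtain G where G: "G \<subseteq> vars_in n P" "minimal_vertex_cover n t G"
    using exists_minimal_vertex_cover_subset[OF vertex_cover_vars_in_prime[OF t P]] by blast
  then have cov: "vertex_cover n t G" and "G \<subseteq> {1..n}"
    by (auto simp: minimal_vertex_cover_def vertex_cover_def)
  have "var_divisible n G = P"
    using least var_divisible_subset_ideal[OF G(1) primeideal.axioms(1)[OF P(1)]]
      primeideal_var_divisible path_ideal_subset_var_divisible[OF t cov] by blast
  then show "P \<in> var_ideal n ` {F. minimal_vertex_cover n t F}"
    using G(2) var_ideal_eq_var_divisible[OF \<open>G \<subseteq> {1..n}\<close>] by auto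
next
  fix P :: "'a mpoly set"
  assume "P \<in> var_ideal n ` {F. minimal_vertex_cover n t F}"
  then obtain G where G: "minimal_vertex_cover n t G" and "P = var_ideal n G" by auto
  then have cov: "vertex_cover n t G" and "G \<subseteq> {1..n}"
    by (auto simp: minimal_vertex_cover_def vertex_cover_def)
  then have P: "P = var_divisible n G" using \<open>P = var_ideal n G\<close> var_ideal_eq_var_divisible by blast
  have "Q = P" if Q: "primeideal Q (polyring n)" "path_ideal n t \<subseteq> Q" "Q \<subseteq> P" for Q
  proof -
    have "vars_in n Q \<subseteq> G" using Q(3) by (auto simp: P vars_in_def Var_in_var_divisible_iff)
    then have "vars_in n Q = G"
      using G vertex_cover_vars_in_prime[OF t Q(1,2)] by (auto simp: minimal_vertex_cover_def)
    then show ?thesis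
      using var_divisible_subset_ideal[of G n Q] primeideal.axioms(1)[OF Q(1)] Q(3) P by auto
  qed
  then show "P \<in> {P. minimal_prime (polyring n) (path_ideal n t) P}"
    using P primeideal_var_divisible path_ideal_subset_var_divisible[OF t cov]
    by (auto simp: minimal_prime_def)
qed

theorem theorem2p7:
  fixes n t :: nat
  assumes "1 \<le> t" and "t \<le> n"
  shows "{P. minimal_prime (polyring n :: ('a::field) mpoly ring) (path_ideal n t) P}
           = var_ideal n ` Cnt n t
         \<and> Cnt n t = {F. minimal_vertex_cover n t F}"
  using minimal_primes_path_ideal[OF assms, where 'a='a] Cnt_eq_minimal_vertex_covers[OF assms]
  by simp

end
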